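(* Let $\ell\in\{\tfrac12,\tfrac32,\tfrac52,\dots\}$ and let $\tau^\ell$ be the $(2\ell+1)\times(2\ell+1)$ matrix defined in the context. Then: (a) $\tau^\ell$ is invertible; (b) $|\tau^\ell_{-\ell,-\ell}|<1$ and $|\tau^\ell_{\ell,\ell}|<1$; (c) Let $v\in\mathbb{C}^{2\ell+1}$ (coordinates indexed by $-\ell,-\ell+1,\dots,\ell$) be supported either on $\{-\ell,\dots,-\tfrac12\}$ or on $\{\tfrac12,\dots,\ell\}$, and suppose $\tau^\ell v$ is supported either on $\{n: n+\ell\text{ even}\}$ or on $\{n: n+\ell\text{ odd}\}$. Then $v=0$ (and hence $\tau^\ell v=0$).
   Context: For $\ell\in\{\tfrac12,1,\tfrac32,2,\dots\}$ and $m,n\in\{-\ell,-\ell+1,\dots,\ell\}$, define $$\tau^\ell_{m,n}=\sqrt{\frac{(\ell-m)!(\ell+m)!}{(\ell-n)!(\ell+n)!}}\;\frac{i^{2\ell}}{2^\ell}\int_{|z|=1}(z+1)^{\ell-n}(z-1)^{\ell+n}z^{m-\ell}\,\frac{dz}{2\pi i z},$$ i.e. the prefactor times the coefficient of $z^{\ell-m}$ in the polynomial $(z+1)^{\ell-n}(z-1)^{\ell+n}$. The matrix $\tau^\ell=(\tau^\ell_{m,n})$, rows indexed by $m$ and columns by $n$ in increasing order from $-\ell$ to $\ell$, is the matrix of the spin-$\ell$ irreducible representation of $SU(2)$ evaluated at $\frac{1}{\sqrt2}\begin{pmatrix} i & i\\ i & -i\end{pmatrix}$, and is unitary. *)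

theory Defs
  imports Complex_Main "HOL-Computational_Algebra.Polynomial" "Jordan_Normal_Form.Matrix"
begin

text \<open>The spin-l matrix tau^l, parametrised by d = 2l (a natural number).
  Row/column index m (resp. n) in {-l..l} is encoded as i = m + l (resp. j = n + l)
  in {0..d}. Then l-m = d-i, l+m = i, l-n = d-j, l+n = j, and the entry is
  the prefactor times the coefficient of z^(d-i) in (z+1)^(d-j) (z-1)^j.\<close>

definition tau_entry :: "nat \<Rightarrow> nat \<Rightarrow> nat \<Rightarrow> complex" where
  "tau_entry d i j =
     complex_of_real (sqrt (real (fact (d - i) * fact i) / real (fact (d - j) * fact j)))
     * (\<i> ^ d / complex_of_real (2 powr (real d / 2)))
     * coeff ([:1, 1:] ^ (d - j) * [:-1, 1:] ^ j) (d - i)"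

definition tau :: "nat \<Rightarrow> complex mat" where
  "tau d = mat (d + 1) (d + 1) (\<lambda>(i, j). tau_entry d i j)"

end

(*
  Write tau = c D P D\<^sup>-\<^sup>1 with c = i^d / 2^(d/2), D = diag (sqrt ((d - i)! i!)) and
  P i j the coefficient of z^(d-i) in (z+1)^(d-j) (z-1)^j.  The Cayley substitution
  z \<mapsto> (z+1)/(z-1) is an involution, which yields P\<^sup>2 = 2^d, hence tau\<^sup>2 = (-1)^d and tau is
  invertible; the corner entries are c and (-1)^d c, of modulus 2^(-d/2) < 1.

  For (c), tau v is, up to diagonal scaling and reversal of indices, the coefficient vector
  of q = \<Sum>j (v j / D j) (z+1)^(d-j) (z-1)^j, a polynomial of degree \<le> d = 2k+1.  The support
  condition on v makes (z+1)^(k+1) or (z-1)^(k+1) divide q; the parity condition on tau v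
  makes q even or odd, so q(-z) = \<plusminus>q(z) and both powers divide q.  Their product has degree
  2k+2 > deg q, so q = 0, hence tau v = 0 and v = 0.
*)

theory Submission
  imports Defs "HOL-Computational_Algebra.Polynomial_Factorial" "HOL-Computational_Algebra.Field_as_Ring"
begin

definition tau_poly :: "nat \<Rightarrow> nat \<Rightarrow> complex poly" where
  "tau_poly d j = [:1, 1:] ^ (d - j) * [:-1, 1:] ^ j"

definition tau_weight :: "nat \<Rightarrow> nat \<Rightarrow> complex" where
  "tau_weight d i = complex_of_real (sqrt (real (fact (d - i) * fact i)))"

definition tau_scale :: "nat \<Rightarrow> complex" where
  "tau_scale d = \<i> ^ d / complex_of_real (2 powr (real d / 2))"

lemma tau_weight_nonzero [simp]: "tau_weight d i \<noteq> 0"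
  by (simp add: tau_weight_def)

lemma tau_scale_nonzero [simp]: "tau_scale d \<noteq> 0"
  by (simp add: tau_scale_def)

lemma tau_entry_eq:
  "tau_entry d i j = tau_scale d * tau_weight d i / tau_weight d j * coeff (tau_poly d j) (d - i)"
  by (simp add: tau_entry_def tau_scale_def tau_weight_def tau_poly_def real_sqrt_divide mult_ac)

lemma tau_scale_square: "tau_scale d ^ 2 * 2 ^ d = (-1) ^ d"
proof -
  have "(2 powr (real d / 2)) ^ 2 = (2::real) ^ d"
    by (simp add: powr_power powr_realpow)
  then have "complex_of_real (2 powr (real d / 2)) ^ 2 = 2 ^ d"
    by (metis of_real_numeral of_real_power)
  moreover have "(\<i> ^ d) ^ 2 = (-1) ^ d"
    by (simp flip: power_mult power_mult_distrib add: mult.commute[of d])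
  ultimately show ?thesis
    by (simp add: tau_scale_def power_divide)
qed

lemma cmod_tau_scale_less_1: "0 < d \<Longrightarrow> cmod (tau_scale d) < 1"
  by (simp add: tau_scale_def norm_divide norm_power)

lemma degree_tau_poly: "j \<le> d \<Longrightarrow> degree (tau_poly d j) \<le> d"
  unfolding tau_poly_def
  by (rule order.trans[OF degree_mult_le]) (simp add: degree_linear_power)

lemma poly_eqI_off_point:
  fixes p q :: "'a::{idom, ring_char_0} poly"
  assumes "\<And>z. z \<noteq> a \<Longrightarrow> poly p z = poly q z"
  shows "p = q"
proof (rule ccontr)
  assume "p \<noteq> q"
  then have "finite {z. poly (p - q) z = 0}"
    by (intro poly_roots_finite) simp
  moreover have "UNIV - {a} \<subseteq> {z. poly (p - q) z = 0}"
    using assms by auto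
  moreover have "infinite (UNIV - {a})"
    by (simp add: infinite_UNIV_char_0)
  ultimately show False
    using finite_subset by blast
qed

lemma poly_tau_poly_cayley:
  assumes "z \<noteq> 1" "l \<le> d"
  shows "(z - 1) ^ d * poly (tau_poly d l) ((z + 1) / (z - 1)) = 2 ^ d * z ^ (d - l)"
proof -
  define w where "w = (z + 1) / (z - 1)"
  have "(z - 1) * (w + 1) = 2 * z" "(z - 1) * (w - 1) = 2"
    using assms(1) by (simp_all add: w_def field_simps)
  have "(z - 1) ^ d * poly (tau_poly d l) w
      = ((z - 1) * (w + 1)) ^ (d - l) * ((z - 1) * (w - 1)) ^ l"
    using assms(2) by (simp add: tau_poly_def power_mult_distrib add.commute mult_ac flip: power_add)
  also have "\<dots> = 2 ^ d * z ^ (d - l)"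
    using assms(2) by (simp add: \<open>(z - 1) * (w + 1) = 2 * z\<close> \<open>(z - 1) * (w - 1) = 2\<close>
        power_mult_distrib flip: power_add)
  finally show ?thesis
    by (simp add: w_def)
qed

text \<open>In matrix form: P * P = 2^d \<cdot> 1 for P i j = coeff (tau_poly d j) (d - i).\<close>

lemma tau_poly_involution:
  assumes "l \<le> d"
  shows "(\<Sum>j\<le>d. Polynomial.smult (coeff (tau_poly d l) (d - j)) (tau_poly d j)) = monom (2 ^ d) (d - l)"
proof (rule poly_eqI_off_point)
  fix z :: complex
  assume z: "z \<noteq> 1"
  define c where "c m = coeff (tau_poly d l) m" for m
  have "poly (\<Sum>j\<le>d. Polynomial.smult (c (d - j)) (tau_poly d j)) z
      = (\<Sum>j\<le>d. c (d - j) * ((z + 1) ^ (d - j) * (z - 1) ^ j))"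
    by (simp add: poly_sum tau_poly_def add.commute)
  also have "\<dots> = (\<Sum>m\<le>d. c m * ((z + 1) ^ m * (z - 1) ^ (d - m)))"
    by (rule sum.reindex_bij_witness[of _ "\<lambda>m. d - m" "\<lambda>j. d - j"]) auto
  also have "\<dots> = (z - 1) ^ d * (\<Sum>m\<le>d. c m * ((z + 1) / (z - 1)) ^ m)"
    unfolding sum_distrib_left
    using z by (intro sum.cong) (auto simp: power_divide field_simps simp flip: power_add)
  also have "(\<Sum>m\<le>d. c m * ((z + 1) / (z - 1)) ^ m) = poly (tau_poly d l) ((z + 1) / (z - 1))"
    unfolding c_def
    by (subst (2) poly_as_sum_of_monoms'[OF degree_tau_poly[OF assms], symmetric])
       (simp add: poly_sum poly_monom)
  finally show "poly (\<Sum>j\<le>d. Polynomial.smult (c (d - j)) (tau_poly d j)) z = poly (monom (2 ^ d) (d - l)) z"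
    using poly_tau_poly_cayley[OF z assms] by (simp add: poly_monom)
qed

lemma tau_poly_coeff_square:
  assumes "i \<le> d" "l \<le> d"
  shows "(\<Sum>j\<le>d. coeff (tau_poly d j) (d - i) * coeff (tau_poly d l) (d - j)) = (if i = l then 2 ^ d else 0)"
proof -
  have "d - l = d - i \<longleftrightarrow> i = l"
    using assms by auto
  then show ?thesis
    using arg_cong[OF tau_poly_involution[OF assms(2)], of "\<lambda>p. coeff p (d - i)"]
    by (simp add: coeff_sum coeff_monom mult.commute)
qed

lemma dim_tau [simp]: "dim_row (tau d) = d + 1" "dim_col (tau d) = d + 1"
  by (simp_all add: tau_def)

lemma tau_carrier_mat: "tau d \<in> carrier_mat (d + 1) (d + 1)"
  by (simp add: carrier_matI)

lemma tau_square: "tau d * tau d = (-1) ^ d \<cdot>\<^sub>m 1\<^sub>m (d + 1)"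
proof (rule eq_matI)
  fix i l
  assume "i < dim_row ((-1) ^ d \<cdot>\<^sub>m 1\<^sub>m (d + 1) :: complex mat)"
    "l < dim_col ((-1) ^ d \<cdot>\<^sub>m 1\<^sub>m (d + 1) :: complex mat)"
  then have il: "i \<le> d" "l \<le> d"
    by auto
  define s where "s = tau_scale d ^ 2 * tau_weight d i / tau_weight d l"
  have "(tau d * tau d) $$ (i, l) = (\<Sum>j\<le>d. tau_entry d i j * tau_entry d j l)"
    using il by (simp add: tau_def scalar_prod_def atLeast0LessThan lessThan_Suc_atMost del: sum.op_ivl_Suc)
  also have "\<dots> = s * (\<Sum>j\<le>d. coeff (tau_poly d j) (d - i) * coeff (tau_poly d l) (d - j))"
    unfolding sum_distrib_left
    by (intro sum.cong) (simp_all add: s_def tau_entry_eq field_simps power2_eq_square)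
  also have "\<dots> = ((-1) ^ d \<cdot>\<^sub>m 1\<^sub>m (d + 1)) $$ (i, l)"
    using il tau_scale_square[of d] by (simp add: tau_poly_coeff_square s_def)
  finally show "(tau d * tau d) $$ (i, l) = ((-1) ^ d \<cdot>\<^sub>m 1\<^sub>m (d + 1)) $$ (i, l)" .
qed simp_all

lemma tau_inverse:
  "((-1) ^ d \<cdot>\<^sub>m tau d) * tau d = 1\<^sub>m (d + 1)"
  "tau d * ((-1) ^ d \<cdot>\<^sub>m tau d) = 1\<^sub>m (d + 1)"
proof -
  have "(-1) ^ d * (-1) ^ d = (1::complex)"
    by (simp flip: power_add)
  then have "(-1) ^ d \<cdot>\<^sub>m (tau d * tau d) = 1\<^sub>m (d + 1)"
    by (intro eq_matI) (simp_all add: tau_square mult.assoc[symmetric])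
  then show "((-1) ^ d \<cdot>\<^sub>m tau d) * tau d = 1\<^sub>m (d + 1)" "tau d * ((-1) ^ d \<cdot>\<^sub>m tau d) = 1\<^sub>m (d + 1)"
    by (simp_all add: mult_smult_distrib[OF tau_carrier_mat tau_carrier_mat]
        mult_smult_assoc_mat[OF tau_carrier_mat tau_carrier_mat])
qed

lemma invertible_tau: "invertible_mat (tau d)"
  unfolding invertible_mat_def inverts_mat_def
  using tau_inverse[of d] by (intro conjI exI[of _ "(-1) ^ d \<cdot>\<^sub>m tau d"]) (auto simp: square_mat.simps)

lemma tau_mult_vec_eq_0_imp:
  assumes v: "v \<in> carrier_vec (d + 1)" and "tau d *\<^sub>v v = 0\<^sub>v (d + 1)"
  shows "v = 0\<^sub>v (d + 1)"
proof -
  have "v = (((-1) ^ d \<cdot>\<^sub>m tau d) * tau d) *\<^sub>v v"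
    using v by (simp add: tau_inverse)
  also have "\<dots> = ((-1) ^ d \<cdot>\<^sub>m tau d) *\<^sub>v 0\<^sub>v (d + 1)"
    by (subst assoc_mult_mat_vec[OF smult_carrier_mat[OF tau_carrier_mat] tau_carrier_mat v]) (simp add: assms(2))
  also have "\<dots> = 0\<^sub>v (d + 1)"
    by (intro eq_vecI) (simp_all add: scalar_prod_def)
  finally show ?thesis .
qed

lemma tau_corner_entries:
  "tau d $$ (0, 0) = tau_scale d"
  "tau d $$ (d, d) = (-1) ^ d * tau_scale d"
proof -
  have "coeff ([:-1, 1:] ^ d) 0 = (-1 :: complex) ^ d"
    by (simp add: poly_0_coeff_0[symmetric] poly_power)
  then show "tau d $$ (0, 0) = tau_scale d" "tau d $$ (d, d) = (-1) ^ d * tau_scale d"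
    by (simp_all add: tau_def tau_entry_eq tau_poly_def coeff_linear_power)
qed

definition tau_vec_poly :: "nat \<Rightarrow> complex vec \<Rightarrow> complex poly" where
  "tau_vec_poly d v = (\<Sum>j\<le>d. Polynomial.smult (v $ j / tau_weight d j) (tau_poly d j))"

lemma tau_mult_vec_nth:
  assumes "v \<in> carrier_vec (d + 1)" "i \<le> d"
  shows "(tau d *\<^sub>v v) $ i = tau_scale d * tau_weight d i * coeff (tau_vec_poly d v) (d - i)"
proof -
  have "(tau d *\<^sub>v v) $ i = (\<Sum>j\<le>d. tau_entry d i j * v $ j)"
    using assms by (simp add: tau_def scalar_prod_def atLeast0LessThan lessThan_Suc_atMost del: sum.op_ivl_Suc)
  then show ?thesis
    by (simp add: tau_vec_poly_def tau_entry_eq coeff_sum sum_distrib_left field_simps)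
qed

lemma degree_tau_vec_poly: "degree (tau_vec_poly d v) \<le> d"
  unfolding tau_vec_poly_def
  by (intro degree_sum_le) (auto intro: order.trans[OF degree_smult_le] degree_tau_poly)

lemma coeff_tau_vec_poly_eq_0:
  assumes "v \<in> carrier_vec (d + 1)" and "m \<le> d \<Longrightarrow> (tau d *\<^sub>v v) $ (d - m) = 0"
  shows "coeff (tau_vec_poly d v) m = 0"
proof (cases "m \<le> d")
  case True
  then show ?thesis
    using assms tau_mult_vec_nth[OF assms(1), of "d - m"] by simp
next
  case False
  then show ?thesis
    using degree_tau_vec_poly[of d v] by (intro coeff_eq_0) simp
qed

lemma tau_vec_poly_eq_0_imp:
  assumes v: "v \<in> carrier_vec (d + 1)" and "tau_vec_poly d v = 0"
  shows "v = 0\<^sub>v (d + 1)"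
proof (rule tau_mult_vec_eq_0_imp[OF v], rule eq_vecI)
  fix i
  assume "i < dim_vec (0\<^sub>v (d + 1) :: complex vec)"
  then show "(tau d *\<^sub>v v) $ i = 0\<^sub>v (d + 1) $ i"
    using tau_mult_vec_nth[OF v, of i] assms(2) by simp
qed simp

lemma plus_one_power_dvd_tau_vec_poly:
  assumes "n \<le> d - k" and "\<forall>j. k < j \<and> j \<le> d \<longrightarrow> v $ j = 0"
  shows "[:1, 1:] ^ n dvd tau_vec_poly d v"
  unfolding tau_vec_poly_def
proof (intro dvd_sum)
  fix j
  assume "j \<in> {..d}"
  then have "v $ j = 0 \<or> n \<le> d - j"
    using assms by force
  then show "[:1, 1:] ^ n dvd Polynomial.smult (v $ j / tau_weight d j) (tau_poly d j)"
    by (elim disjE) (simp_all add: tau_poly_def dvd_smult dvd_mult2 le_imp_power_dvd)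
qed

lemma minus_one_power_dvd_tau_vec_poly:
  assumes "\<forall>j < n. v $ j = 0"
  shows "[:-1, 1:] ^ n dvd tau_vec_poly d v"
  unfolding tau_vec_poly_def
proof (intro dvd_sum)
  fix j
  have "v $ j = 0 \<or> n \<le> j"
    using assms by force
  then show "[:-1, 1:] ^ n dvd Polynomial.smult (v $ j / tau_weight d j) (tau_poly d j)"
    by (elim disjE) (simp_all add: tau_poly_def dvd_smult dvd_mult le_imp_power_dvd)
qed

lemma pcompose_power: "pcompose (p ^ n) r = pcompose p r ^ n"
  for p r :: "'a::comm_semiring_1 poly"
  by (induction n) (simp_all add: pcompose_mult pcompose_1)

lemma reflect_linear_power_dvd:
  fixes q :: "'a::comm_ring_1 poly"
  assumes parity: "(\<forall>m. odd m \<longrightarrow> coeff q m = 0) \<or> (\<forall>m. even m \<longrightarrow> coeff q m = 0)"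
    and dvd: "[:a, 1:] ^ n dvd q"
  shows "[:-a, 1:] ^ n dvd q"
proof -
  have coeff_reflect: "coeff (pcompose q [:0, -1:]) m = (if even m then coeff q m else - coeff q m)" for m
    by (simp add: coeff_pcompose_linear)
  from parity have "pcompose q [:0, -1:] = q \<or> pcompose q [:0, -1:] = -q"
  proof
    assume "\<forall>m. odd m \<longrightarrow> coeff q m = 0"
    then show ?thesis
      by (intro disjI1 poly_eqI) (simp add: coeff_reflect)
  next
    assume "\<forall>m. even m \<longrightarrow> coeff q m = 0"
    then show ?thesis
      by (intro disjI2 poly_eqI) (simp add: coeff_reflect)
  qed
  then have "pcompose q [:0, -1:] dvd q"
    by auto
  moreover have "pcompose ([:a, 1:] ^ n) [:0, -1:] dvd pcompose q [:0, -1:]"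
    using dvd by (auto elim!: dvdE simp: pcompose_mult)
  moreover have "pcompose ([:a, 1:] ^ n) [:0, -1:] = (- 1) ^ n * [:-a, 1:] ^ n"
    by (simp add: pcompose_power pcompose_pCons flip: power_mult_distrib)
  ultimately have "(- 1) ^ n * [:-a, 1:] ^ n dvd q"
    using dvd_trans by metis
  then show ?thesis
    by (rule dvd_mult_right)
qed

lemma parity_poly_eq_0:
  fixes q :: "'a::{field_char_0, field_gcd} poly"
  assumes "degree q < 2 * n"
    and parity: "(\<forall>m. odd m \<longrightarrow> coeff q m = 0) \<or> (\<forall>m. even m \<longrightarrow> coeff q m = 0)"
    and "[:1, 1:] ^ n dvd q \<or> [:-1, 1:] ^ n dvd q"
  shows "q = 0"
proof (rule ccontr)
  assume "q \<noteq> 0"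
  have "[:1, 1:] ^ n dvd q"
    using assms(3) reflect_linear_power_dvd[OF parity, of "-1" n] by auto
  moreover have "[:-1, 1:] ^ n dvd q"
    using assms(3) reflect_linear_power_dvd[OF parity, of 1 n] by auto
  moreover have "coprime [:1, 1:] ([:-1, 1:] :: 'a poly)"
  proof (rule coprimeI)
    fix c
    assume "c dvd [:1, 1:]" "c dvd ([:-1, 1:] :: 'a poly)"
    then have "c dvd [:1, 1:] - [:-1, 1:]"
      by (rule dvd_diff)
    then show "is_unit c"
      by (rule dvd_unit_imp_unit) (simp add: is_unit_const_poly_iff dvd_field_iff)
  qed
  ultimately have "[:1, 1:] ^ n * [:-1, 1:] ^ n dvd q"
    by (simp add: divides_mult coprime_power_left_iff coprime_power_right_iff)
  then have "degree ([:1, 1:] ^ n * [:-1, 1:] ^ n :: 'a poly) \<le> degree q"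
    using \<open>q \<noteq> 0\<close> by (rule dvd_imp_degree_le)
  then have "2 * n \<le> degree q"
    by (simp add: degree_mult_eq degree_linear_power)
  with assms(1) show False
    by simp
qed

lemma tau_vec_poly_parity:
  assumes v: "v \<in> carrier_vec (d + 1)" and "odd d"
    and "(\<forall>j < d + 1. odd j \<longrightarrow> (tau d *\<^sub>v v) $ j = 0) \<or> (\<forall>j < d + 1. even j \<longrightarrow> (tau d *\<^sub>v v) $ j = 0)"
  shows "(\<forall>m. odd m \<longrightarrow> coeff (tau_vec_poly d v) m = 0) \<or> (\<forall>m. even m \<longrightarrow> coeff (tau_vec_poly d v) m = 0)"
  using assms(3)
proof
  assume "\<forall>j < d + 1. odd j \<longrightarrow> (tau d *\<^sub>v v) $ j = 0"
  then have "\<forall>m. even m \<longrightarrow> coeff (tau_vec_poly d v) m = 0"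
    using \<open>odd d\<close> by (auto intro!: coeff_tau_vec_poly_eq_0[OF v])
  then show ?thesis ..
next
  assume "\<forall>j < d + 1. even j \<longrightarrow> (tau d *\<^sub>v v) $ j = 0"
  then have "\<forall>m. odd m \<longrightarrow> coeff (tau_vec_poly d v) m = 0"
    using \<open>odd d\<close> by (auto intro!: coeff_tau_vec_poly_eq_0[OF v])
  then show ?thesis ..
qed

theorem mainTheorem10:
  fixes k :: nat and v :: "complex vec"
  defines "d \<equiv> 2 * k + 1"
  shows "invertible_mat (tau d)
    \<and> cmod (tau d $$ (0, 0)) < 1 \<and> cmod (tau d $$ (d, d)) < 1
    \<and> (v \<in> carrier_vec (d + 1)
        \<and> ((\<forall>i < d + 1. k < i \<longrightarrow> v $ i = 0) \<or> (\<forall>i < d + 1. i \<le> k \<longrightarrow> v $ i = 0))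
        \<and> ((\<forall>j < d + 1. odd j \<longrightarrow> (tau d *\<^sub>v v) $ j = 0)
           \<or> (\<forall>j < d + 1. even j \<longrightarrow> (tau d *\<^sub>v v) $ j = 0))
       \<longrightarrow> v = 0\<^sub>v (d + 1))"
proof (intro conjI impI)
  show "invertible_mat (tau d)"
    by (rule invertible_tau)
  show "cmod (tau d $$ (0, 0)) < 1" "cmod (tau d $$ (d, d)) < 1"
    using cmod_tau_scale_less_1[of d] by (simp_all add: d_def tau_corner_entries norm_mult norm_power)
next
  assume H: "v \<in> carrier_vec (d + 1)
        \<and> ((\<forall>i < d + 1. k < i \<longrightarrow> v $ i = 0) \<or> (\<forall>i < d + 1. i \<le> k \<longrightarrow> v $ i = 0))
        \<and> ((\<forall>j < d + 1. odd j \<longrightarrow> (tau d *\<^sub>v v) $ j = 0)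
           \<or> (\<forall>j < d + 1. even j \<longrightarrow> (tau d *\<^sub>v v) $ j = 0))"
  then have v: "v \<in> carrier_vec (d + 1)"
    by blast
  let ?q = "tau_vec_poly d v"
  have "degree ?q < 2 * (k + 1)"
    using degree_tau_vec_poly[of d v] by (simp add: d_def)
  moreover have "(\<forall>m. odd m \<longrightarrow> coeff ?q m = 0) \<or> (\<forall>m. even m \<longrightarrow> coeff ?q m = 0)"
    using H by (intro tau_vec_poly_parity[OF v]) (simp_all add: d_def)
  moreover have "[:1, 1:] ^ (k + 1) dvd ?q \<or> [:-1, 1:] ^ (k + 1) dvd ?q"
    using H plus_one_power_dvd_tau_vec_poly[of "k + 1" d k v] minus_one_power_dvd_tau_vec_poly[of "k + 1" v d]
    by (auto simp: d_def)
  ultimately have "?q = 0"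
    by (rule parity_poly_eq_0)
  then show "v = 0\<^sub>v (d + 1)"
    by (rule tau_vec_poly_eq_0_imp[OF v])
qed

end
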